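(* Let $G$ and $H$ be convergence groups with $G$ $g$-barrelled, and let $L$ be a locally quasi-convex topological group. Then every separately continuous bihomomorphism $u:G\times H\to L$ is jointly continuous in each of the following cases: (i) $H$ is locally compact; (ii) $G$ and $H$ are first countable.
   Context: All groups are abelian. A convergence structure on a set $X$ assigns to each $x$ a collection of filters converging to $x$. This assignment must satisfy three conditions: point ultrafilters converge to their point; finite intersections of filters converging to $x$ converge to $x$; and finer filters of convergent filters converge. A map is continuous if it sends filters converging to $x$ to filters converging to the image of $x$. A convergence group is an abelian group with a convergence structure such that $\mathcal F\to x$, $\mathcal G\to y$ imply $\mathcal F-\mathcal G\to x-y$. Topological groups are convergence groups. $G\times H$ carries the product convergence structure, in which a filter converges iff its projections converge. A convergence space is Hausdorff if limits are unique. A subset $K$ is compact if every ultrafilter containing $K$ converges to a point of $K$. A convergence space is locally compact if it is Hausdorff and each convergent filter contains a compact set. A convergence space is first countable if for every filter $\mathcal F\to x$ there is a filter $\mathcal V\subseteq\mathcal F$ with a countable base such that $\mathcal V\to x$. $\mathbb T=\mathbb R/\mathbb Z$, $\mathbb T_+=\rho([-1/4,1/4])$ where $\rho:\mathbb R\to\mathbb T$ is the quotient map. $\Gamma G$ is the group of continuous homomorphisms $G\to\mathbb T$, and $\Gamma_s G$ is $\Gamma G$ with the topology of pointwise convergence. A set $M\subseteq\Gamma G$ is equicontinuous if for every filter $\mathcal F\to0$ in $G$, the filter generated by $\{\varphi(x):\varphi\in M,x\in F\}$, $F\in\mathcal F$, converges to $0$. $G$ is $g$-barrelled if every compact subset of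 $\Gamma_s G$ is equicontinuous. A subset $A$ of a topological group $L$ is quasi-convex if for every $x\notin A$ there is a continuous character $\varphi$ with $\varphi(A)\subseteq\mathbb T_+$, $\varphi(x)\notin\mathbb T_+$. $L$ is locally quasi-convex if it has a zero neighbourhood base of quasi-convex sets. A bihomomorphism is a map that is a homomorphism in each variable. It is separately continuous if it is continuous in each variable separately. *)

theory Defs
  imports "HOL-Analysis.Analysis"
begin

text \<open>Filters are Isabelle filters; F \<le> G means F is finer than G; the intersection of
  two filters (as families of sets) is sup F G; the improper filter is bot.\<close>

definition convergence :: "('a filter \<Rightarrow> 'a \<Rightarrow> bool) \<Rightarrow> bool" where
  "convergence conv \<longleftrightarrow>
     (\<forall>x. conv (principal {x}) x) \<and>
     (\<forall>F G x. conv F x \<and> conv G x \<longrightarrow> conv (sup F G) x) \<and>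
     (\<forall>F G x. conv F x \<and> G \<le> F \<longrightarrow> conv G x)"

definition conv_continuous ::
  "('a filter \<Rightarrow> 'a \<Rightarrow> bool) \<Rightarrow> ('b filter \<Rightarrow> 'b \<Rightarrow> bool) \<Rightarrow> ('a \<Rightarrow> 'b) \<Rightarrow> bool" where
  "conv_continuous convA convB f \<longleftrightarrow> (\<forall>F x. convA F x \<longrightarrow> convB (filtermap f F) (f x))"

definition top_conv :: "'a::topological_space filter \<Rightarrow> 'a \<Rightarrow> bool" where
  "top_conv F x \<longleftrightarrow> F \<le> nhds x"

definition prod_conv ::
  "('a filter \<Rightarrow> 'a \<Rightarrow> bool) \<Rightarrow> ('b filter \<Rightarrow> 'b \<Rightarrow> bool) \<Rightarrow> ('a \<times> 'b) filter \<Rightarrow> 'a \<times> 'b \<Rightarrow> bool" where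
  "prod_conv convA convB F p \<longleftrightarrow> convA (filtermap fst F) (fst p) \<and> convB (filtermap snd F) (snd p)"

text \<open>F - G is the filter generated by the sets A - B, A in F, B in G.\<close>
definition convergence_group :: "('a::ab_group_add filter \<Rightarrow> 'a \<Rightarrow> bool) \<Rightarrow> bool" where
  "convergence_group conv \<longleftrightarrow> convergence conv \<and>
     (\<forall>F G x y. conv F x \<and> conv G y \<longrightarrow>
        conv (filtermap (\<lambda>(a, b). a - b) (F \<times>\<^sub>F G)) (x - y))"

definition ultrafilter :: "'a filter \<Rightarrow> bool" where
  "ultrafilter U \<longleftrightarrow> U \<noteq> bot \<and> (\<forall>G. G \<le> U \<and> G \<noteq> bot \<longrightarrow> G = U)"

definition conv_hausdorff :: "('a filter \<Rightarrow> 'a \<Rightarrow> bool) \<Rightarrow> bool" where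
  "conv_hausdorff conv \<longleftrightarrow> (\<forall>F x y. F \<noteq> bot \<and> conv F x \<and> conv F y \<longrightarrow> x = y)"

definition conv_compact :: "('a filter \<Rightarrow> 'a \<Rightarrow> bool) \<Rightarrow> 'a set \<Rightarrow> bool" where
  "conv_compact conv K \<longleftrightarrow>
     (\<forall>U. ultrafilter U \<and> eventually (\<lambda>x. x \<in> K) U \<longrightarrow> (\<exists>x\<in>K. conv U x))"

definition conv_locally_compact :: "('a filter \<Rightarrow> 'a \<Rightarrow> bool) \<Rightarrow> bool" where
  "conv_locally_compact conv \<longleftrightarrow> conv_hausdorff conv \<and>
     (\<forall>F x. conv F x \<longrightarrow> (\<exists>K. conv_compact conv K \<and> eventually (\<lambda>y. y \<in> K) F))"

definition countable_base_filter :: "'a filter \<Rightarrow> bool" where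
  "countable_base_filter F \<longleftrightarrow>
     (\<exists>B :: 'a set set. countable B \<and> (\<forall>P. eventually P F \<longleftrightarrow> (\<exists>b\<in>B. \<forall>x\<in>b. P x)))"

text \<open>V \<subseteq> F (as set families) is F \<le> V.\<close>
definition conv_first_countable :: "('a filter \<Rightarrow> 'a \<Rightarrow> bool) \<Rightarrow> bool" where
  "conv_first_countable conv \<longleftrightarrow>
     (\<forall>F x. conv F x \<longrightarrow> (\<exists>V. F \<le> V \<and> countable_base_filter V \<and> conv V x))"

text \<open>The circle group T = R/Z is represented by the unit circle in the complex plane
  (a topologically isomorphic copy), via rho t = exp(2 pi i t); its zero is 1.\<close>
definition rho :: "real \<Rightarrow> complex" where
  "rho t = cis (2 * pi * t)"

definition Tcirc :: "complex set" where
  "Tcirc = rho ` UNIV"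

definition Tplus :: "complex set" where
  "Tplus = rho ` {-1/4..1/4}"

definition characters :: "('a::ab_group_add filter \<Rightarrow> 'a \<Rightarrow> bool) \<Rightarrow> ('a \<Rightarrow> complex) set" where
  "characters conv = {\<phi>. (\<forall>x. \<phi> x \<in> Tcirc) \<and> (\<forall>x y. \<phi> (x + y) = \<phi> x * \<phi> y) \<and>
                           conv_continuous conv top_conv \<phi>}"

definition equicontinuous :: "('a::ab_group_add filter \<Rightarrow> 'a \<Rightarrow> bool) \<Rightarrow> ('a \<Rightarrow> complex) set \<Rightarrow> bool" where
  "equicontinuous conv M \<longleftrightarrow>
     (\<forall>F. conv F 0 \<longrightarrow> filtermap (\<lambda>(\<phi>, x). \<phi> x) (principal M \<times>\<^sub>F F) \<le> nhds 1)"

text \<open>Compactness in Gamma_s G: the pointwise (product) topology on functions.\<close>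
definition g_barrelled :: "('a::ab_group_add filter \<Rightarrow> 'a \<Rightarrow> bool) \<Rightarrow> bool" where
  "g_barrelled conv \<longleftrightarrow>
     (\<forall>M. M \<subseteq> characters conv \<and> compact M \<longrightarrow> equicontinuous conv M)"

definition quasi_convex :: "'c::topological_ab_group_add set \<Rightarrow> bool" where
  "quasi_convex A \<longleftrightarrow>
     (\<forall>x. x \<notin> A \<longrightarrow> (\<exists>\<phi> \<in> characters top_conv. \<phi> ` A \<subseteq> Tplus \<and> \<phi> x \<notin> Tplus))"

definition locally_quasi_convex :: "'c::topological_ab_group_add itself \<Rightarrow> bool" where
  "locally_quasi_convex _ \<longleftrightarrow>
     (\<forall>U::'c set. open U \<and> 0 \<in> U \<longrightarrow>
        (\<exists>V W. open W \<and> 0 \<in> W \<and> W \<subseteq> V \<and> V \<subseteq> U \<and> quasi_convex V))"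

definition bihomomorphism :: "('a::ab_group_add \<Rightarrow> 'b::ab_group_add \<Rightarrow> 'c::ab_group_add) \<Rightarrow> bool" where
  "bihomomorphism u \<longleftrightarrow>
     (\<forall>x x' y. u (x + x') y = u x y + u x' y) \<and> (\<forall>x y y'. u x (y + y') = u x y + u x y')"

definition separately_continuous ::
  "('a filter \<Rightarrow> 'a \<Rightarrow> bool) \<Rightarrow> ('b filter \<Rightarrow> 'b \<Rightarrow> bool) \<Rightarrow> ('a \<Rightarrow> 'b \<Rightarrow> 'c::topological_space) \<Rightarrow> bool" where
  "separately_continuous convA convB u \<longleftrightarrow>
     (\<forall>y. conv_continuous convA top_conv (\<lambda>x. u x y)) \<and>
     (\<forall>x. conv_continuous convB top_conv (\<lambda>y. u x y))"

definition jointly_continuous ::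
  "('a filter \<Rightarrow> 'a \<Rightarrow> bool) \<Rightarrow> ('b filter \<Rightarrow> 'b \<Rightarrow> bool) \<Rightarrow> ('a \<Rightarrow> 'b \<Rightarrow> 'c::topological_space) \<Rightarrow> bool" where
  "jointly_continuous convA convB u \<longleftrightarrow>
     conv_continuous (prod_conv convA convB) top_conv (\<lambda>(x, y). u x y)"

end

theory Submission
  imports Defs
begin

(* Fix a quasi-convex set V \<subseteq> L containing a zero
   neighbourhood W, and let V\<degree> be its polar, the continuous characters \<phi> of L with
   \<phi>(V) \<subseteq> T+.  The polar V\<degree> is equicontinuous and compact in the pointwise
   topology.  For a compact set K \<subseteq> H, the transposed characters x \<mapsto> \<phi>(u x b),
   \<phi> \<in> V\<degree>, b \<in> K, therefore form a compact subset of \<Gamma>_s G; since G is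
   g-barrelled this set is equicontinuous, which, by quasi-convexity of V, means
   that u(a, b) \<in> V for all b \<in> K as soon as a is close to 0 in G.
   In case (i) a convergent filter on H contains a compact set K; in case (ii) a
   "bad" pair of sequences a_n \<rightarrow> 0, b_n \<rightarrow> 0 contradicts this with the compact
   set K = {0} \<union> {b_n}.  Hence u is continuous at (0,0), and by bi-additivity
   everywhere. *)

section \<open>Ultrafilters\<close>

lemma ultrafilter_cases:
  assumes U: "ultrafilter U"
  shows "eventually P U \<or> eventually (\<lambda>x. \<not> P x) U"
proof (rule disjCI)
  assume n: "\<not> eventually (\<lambda>x. \<not> P x) U"
  let ?UP = "inf U (principal {x. P x})"
  have "?UP \<noteq> bot"
    using n by (simp add: eventually_inf_principal trivial_limit_def)
  then have "?UP = U" using U unfolding ultrafilter_def by (meson inf_le1)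
  moreover have "eventually P ?UP" by (simp add: eventually_inf_principal)
  ultimately show "eventually P U" by simp
qed

lemma ultrafilter_filtermap:
  assumes U: "ultrafilter U"
  shows "ultrafilter (filtermap f U)"
  unfolding ultrafilter_def
proof (intro conjI allI impI)
  show "filtermap f U \<noteq> bot" using U by (simp add: ultrafilter_def filtermap_bot_iff)
  fix G assume G: "G \<le> filtermap f U \<and> G \<noteq> bot"
  have "filtermap f U \<le> G"
  proof (rule filter_leI)
    fix P assume P: "eventually P G"
    show "eventually P (filtermap f U)"
    proof (rule ccontr)
      assume "\<not> eventually P (filtermap f U)"
      then have "eventually (\<lambda>x. \<not> P x) (filtermap f U)"
        using ultrafilter_cases[OF U, of "\<lambda>x. P (f x)"] by (simp add: eventually_filtermap)
      then have "eventually (\<lambda>x. \<not> P x) G" using G filter_leD by blast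
      with P have "eventually (\<lambda>x. False) G" by (auto elim: eventually_elim2)
      then show False using G by (simp add: trivial_limit_def)
    qed
  qed
  then show "G = filtermap f U" using G by (simp add: antisym)
qed

text \<open>Every proper filter is refined by an ultrafilter (Zorn's lemma on the
  event families of proper filters below F).\<close>
lemma ultrafilter_exists:
  fixes F :: "'a filter"
  assumes F: "F \<noteq> bot"
  shows "\<exists>U. ultrafilter U \<and> U \<le> F"
proof -
  define E where "E = (\<lambda>G::'a filter. {P. eventually P G})"
  have E_mono: "E G1 \<subseteq> E G2 \<longleftrightarrow> G2 \<le> G1" for G1 G2
    by (auto simp: E_def le_filter_def)
  define A where "A = {E G | G. G \<le> F \<and> G \<noteq> bot}"
  have "\<exists>M\<in>A. \<forall>X\<in>A. M \<subseteq> X \<longrightarrow> X = M"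
  proof (rule Zorn_Lemma2, intro ballI)
    fix C assume C: "C \<in> chains A"
    show "\<exists>U\<in>A. \<forall>X\<in>C. X \<subseteq> U"
    proof (cases "C = {}")
      case True then show ?thesis using F by (auto simp: A_def)
    next
      case False
      define Gs where "Gs = {G. G \<le> F \<and> G \<noteq> bot \<and> E G \<in> C}"
      have CA: "C \<subseteq> A" using C by (auto simp: chains_def)
      have Gs_ne: "Gs \<noteq> {}" using False CA by (auto simp: Gs_def A_def)
      have directed: "\<exists>x\<in>Gs. x \<le> inf G1 G2" if "G1 \<in> Gs" "G2 \<in> Gs" for G1 G2
      proof -
        have "E G1 \<subseteq> E G2 \<or> E G2 \<subseteq> E G1"
          using C that by (auto simp: chains_def chain_subset_def Gs_def)
        then show ?thesis using that by (auto simp: E_mono)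
      qed
      have ev: "eventually P (Inf Gs) \<longleftrightarrow> (\<exists>b\<in>Gs. eventually P b)" for P
        by (rule eventually_Inf_base[OF Gs_ne directed])
      have "Inf Gs \<noteq> bot"
        using ev[of "\<lambda>x. False"] by (auto simp: Gs_def trivial_limit_def)
      moreover have "Inf Gs \<le> F" using Gs_ne by (auto simp: Gs_def intro: Inf_lower2)
      ultimately have "E (Inf Gs) \<in> A" by (auto simp: A_def)
      moreover have "X \<subseteq> E (Inf Gs)" if XC: "X \<in> C" for X
      proof -
        obtain G where G: "X = E G" "G \<le> F" "G \<noteq> bot" using XC CA unfolding A_def by blast
        then have "G \<in> Gs" using XC by (auto simp: Gs_def)
        then show ?thesis using G ev by (auto simp: E_def)
      qed
      ultimately show ?thesis by blast
    qed
  qed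
  then obtain U where U: "U \<le> F" "U \<noteq> bot" and max: "\<forall>X\<in>A. E U \<subseteq> X \<longrightarrow> X = E U"
    unfolding A_def by blast
  have "ultrafilter U" unfolding ultrafilter_def
  proof (intro conjI allI impI)
    show "U \<noteq> bot" by fact
    fix G assume G: "G \<le> U \<and> G \<noteq> bot"
    then have "E G \<in> A" using U(1) order_trans unfolding A_def by blast
    moreover have "E U \<subseteq> E G" using G E_mono[of U G] by simp
    ultimately have "E G = E U" using max by blast
    then have "U \<le> G" using E_mono[of G U] by simp
    then show "G = U" using G by (simp add: antisym)
  qed
  then show ?thesis using U(1) by blast
qed

lemma ultrafilter_compact_limit:
  fixes S :: "'a::topological_space set"
  assumes U: "ultrafilter U" and S: "compact S" and ev: "eventually (\<lambda>x. x \<in> S) U"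
  shows "\<exists>x\<in>S. U \<le> nhds x"
proof -
  have "U \<noteq> bot" using U by (simp add: ultrafilter_def)
  then obtain x where x: "x \<in> S" "inf (nhds x) U \<noteq> bot"
    using S ev unfolding compact_filter by blast
  then have "inf (nhds x) U = U" using U unfolding ultrafilter_def by (meson inf_le2)
  then show ?thesis using x(1) inf_le1 by metis
qed

text \<open>An ultrafilter living on an image g ` S is the image of an ultrafilter living
  on S (push it back along a choice of preimages).\<close>
lemma ultrafilter_on_image:
  assumes U: "ultrafilter U" and ev: "eventually (\<lambda>y. y \<in> g ` S) U"
  obtains Q where "ultrafilter Q" "eventually (\<lambda>x. x \<in> S) Q" "filtermap g Q = U"
proof -
  have "\<forall>y\<in>g ` S. \<exists>x. x \<in> S \<and> g x = y" by blast
  then have "\<exists>sel. \<forall>y\<in>g ` S. sel y \<in> S \<and> g (sel y) = y" by (rule bchoice)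
  then obtain sel where sel: "\<forall>y\<in>g ` S. sel y \<in> S \<and> g (sel y) = y" by blast
  show ?thesis
  proof (rule that)
    show "ultrafilter (filtermap sel U)" by (rule ultrafilter_filtermap[OF U])
    show "eventually (\<lambda>x. x \<in> S) (filtermap sel U)"
      unfolding eventually_filtermap using ev by (rule eventually_mono) (use sel in blast)
    have sel_section: "eventually (\<lambda>y. P (g (sel y)) = P y) U" for P
      using ev by (rule eventually_mono) (use sel in metis)
    show "filtermap g (filtermap sel U) = U"
      unfolding filter_eq_iff eventually_filtermap using eventually_subst[OF sel_section] by blast
  qed
qed

lemma compact_if_ultrafilters_converge:
  fixes M :: "'a::topological_space set"
  assumes lim: "\<And>U. ultrafilter U \<Longrightarrow> eventually (\<lambda>x. x \<in> M) U \<Longrightarrow> \<exists>x\<in>M. U \<le> nhds x"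
  shows "compact M"
  unfolding compact_filter
proof (intro allI impI)
  fix F assume F: "F \<noteq> bot" "eventually (\<lambda>x. x \<in> M) F"
  obtain U where U: "ultrafilter U" "U \<le> F" using ultrafilter_exists[OF F(1)] by blast
  then have "eventually (\<lambda>x. x \<in> M) U" using F(2) filter_leD by blast
  then obtain x where x: "x \<in> M" "U \<le> nhds x" using lim U(1) by blast
  have "U \<noteq> bot" using U(1) by (simp add: ultrafilter_def)
  moreover have "U \<le> inf (nhds x) F" using U(2) x(2) by simp
  ultimately have "inf (nhds x) F \<noteq> bot" by (metis bot.extremum_uniqueI)
  with x(1) show "\<exists>x\<in>M. inf (nhds x) F \<noteq> bot" by blast
qed

lemma tendsto_pointwise_iff:
  fixes f :: "'x \<Rightarrow> 'a \<Rightarrow> 'b::topological_space"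
  shows "(f \<longlongrightarrow> l) F \<longleftrightarrow> (\<forall>i. ((\<lambda>c. f c i) \<longlongrightarrow> l i) F)"
proof -
  have "(f \<longlongrightarrow> l) F \<longleftrightarrow> limitin (product_topology (\<lambda>i. euclidean) UNIV) f l F"
    by (simp add: euclidean_product_topology)
  also have "\<dots> \<longleftrightarrow> (\<forall>i. ((\<lambda>c. f c i) \<longlongrightarrow> l i) F)"
    by (subst limitin_componentwise) simp
  finally show ?thesis .
qed

lemma ultrafilter_pointwise_limit:
  fixes U :: "('x \<Rightarrow> 'b::topological_space) filter"
  assumes U: "ultrafilter U" and S: "compact S" and ev: "eventually (\<lambda>\<phi>. \<forall>c. \<phi> c \<in> S) U"
  shows "\<exists>\<psi>. U \<le> nhds \<psi>"
proof -
  have "\<exists>z. ((\<lambda>\<phi>. \<phi> c) \<longlongrightarrow> z) U" for c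
  proof -
    have "eventually (\<lambda>z. z \<in> S) (filtermap (\<lambda>\<phi>. \<phi> c) U)"
      unfolding eventually_filtermap using ev by (rule eventually_mono) blast
    then obtain z where "filtermap (\<lambda>\<phi>. \<phi> c) U \<le> nhds z"
      using ultrafilter_compact_limit[OF ultrafilter_filtermap[OF U] S] by blast
    then show ?thesis by (auto simp: filterlim_def)
  qed
  then obtain \<psi> where "\<forall>c. ((\<lambda>\<phi>. \<phi> c) \<longlongrightarrow> \<psi> c) U" by metis
  then have "((\<lambda>\<phi>. \<phi>) \<longlongrightarrow> \<psi>) U" by (simp add: tendsto_pointwise_iff)
  then show ?thesis by (auto simp: filterlim_def)
qed

section \<open>The circle group\<close>

lemma unit_circle_cis:
  assumes "cmod z = 1"
  shows "z = cis (Arg z)"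
proof -
  have "z \<noteq> 0" using assms by auto
  moreover have "sgn z = z" using assms by (simp add: sgn_div_norm)
  ultimately show ?thesis using cis_Arg by metis
qed

lemma Tcirc_eq: "Tcirc = {z. cmod z = 1}"
proof
  show "Tcirc \<subseteq> {z. cmod z = 1}" by (auto simp: Tcirc_def rho_def)
  show "{z. cmod z = 1} \<subseteq> Tcirc"
  proof
    fix z :: complex assume "z \<in> {z. cmod z = 1}"
    then have "z = rho (Arg z / (2 * pi))" using unit_circle_cis by (simp add: rho_def)
    then show "z \<in> Tcirc" by (simp add: Tcirc_def)
  qed
qed

lemma Tplus_eq: "Tplus = {z. cmod z = 1 \<and> Re z \<ge> 0}"
proof
  show "Tplus \<subseteq> {z. cmod z = 1 \<and> Re z \<ge> 0}"
  proof
    fix z assume "z \<in> Tplus"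
    then obtain t where t: "t \<in> {-1/4..1/4}" "z = rho t" by (auto simp: Tplus_def)
    have "2 * pi * (-1/4) \<le> 2 * pi * t" "2 * pi * t \<le> 2 * pi * (1/4)"
      using t(1) by (intro mult_left_mono; simp)+
    then have "0 \<le> cos (2 * pi * t)" by (intro cos_ge_zero) simp_all
    then show "z \<in> {z. cmod z = 1 \<and> Re z \<ge> 0}" using t by (simp add: rho_def)
  qed
  show "{z. cmod z = 1 \<and> Re z \<ge> 0} \<subseteq> Tplus"
  proof
    fix z :: complex assume z: "z \<in> {z. cmod z = 1 \<and> Re z \<ge> 0}"
    then have z_cis: "z = cis (Arg z)" using unit_circle_cis by blast
    have "\<bar>Arg z\<bar> \<le> pi/2"
    proof (rule ccontr)
      assume "\<not> \<bar>Arg z\<bar> \<le> pi/2"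
      moreover have "\<bar>Arg z\<bar> \<le> pi" using Arg_bounded[of z] by auto
      ultimately have "cos \<bar>Arg z\<bar> < 0" by (intro cos_lt_zero_pi) auto
      moreover have "cos (Arg z) = Re z" using z_cis by (metis cis.sel(1))
      ultimately show False using z by (simp add: abs_if split: if_splits)
    qed
    then have "Arg z / (2 * pi) \<in> {-1/4..1/4}" by (auto simp: field_simps abs_if split: if_splits)
    moreover have "z = rho (Arg z / (2 * pi))" using z_cis by (simp add: rho_def)
    ultimately show "z \<in> Tplus" by (auto simp: Tplus_def)
  qed
qed

lemma multiple_in_left_half:
  fixes t :: real
  assumes n: "n \<ge> 1" and t: "pi / (2 * real n) < t" "t \<le> pi"
  shows "\<exists>k\<in>{1..n}. pi/2 < real k * t \<and> real k * t < 3*pi/2"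
proof -
  have "pi / (2 * real n) > 0" using n by simp
  then have t0: "t > 0" using t(1) by linarith
  define q where "q = pi / (2 * t)"
  define k where "k = nat \<lfloor>q\<rfloor> + 1"
  have q0: "q \<ge> 0" using t0 by (simp add: q_def)
  have k_floor: "real k - 1 \<le> q" "q < real k" using q0 by (auto simp: k_def) linarith+
  have "q < real n" using t(1) n t0 by (simp add: q_def field_simps)
  then have "k \<le> n" using q0 by (simp add: k_def) linarith
  moreover have "k \<ge> 1" by (simp add: k_def)
  moreover have "pi/2 < real k * t"
  proof -
    have "pi/2 = q * t" using t0 by (simp add: q_def)
    also have "\<dots> < real k * t" using k_floor t0 by simp
    finally show ?thesis .
  qed
  moreover have "real k * t < 3*pi/2"
  proof (cases "t < pi")
    case True
    have "(real k - 1) * t \<le> q * t" using k_floor t0 by (simp add: mult_right_mono)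
    also have "q * t = pi/2" using t0 by (simp add: q_def)
    finally show ?thesis using True by (simp add: algebra_simps)
  next
    case False
    then have "t = pi" using t(2) by simp
    then have "k = 1" by (simp add: k_def q_def)
    then show ?thesis using \<open>t = pi\<close> by simp
  qed
  ultimately show ?thesis by (intro bexI[of _ k]) auto
qed

lemma circle_arg_bound:
  fixes z :: complex
  assumes z: "cmod z = 1" and n: "n \<ge> 1" and powers: "\<forall>k\<in>{1..n}. Re (z ^ k) \<ge> 0"
  shows "\<bar>Arg z\<bar> \<le> pi / (2 * real n)"
proof (rule ccontr)
  assume "\<not> ?thesis"
  moreover have "\<bar>Arg z\<bar> \<le> pi" using Arg_bounded[of z] by auto
  ultimately obtain k where k: "k \<in> {1..n}" "pi/2 < real k * \<bar>Arg z\<bar>" "real k * \<bar>Arg z\<bar> < 3*pi/2"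
    using multiple_in_left_half[OF n] by (meson not_le)
  have "z ^ k = cis (real k * Arg z)" using unit_circle_cis[OF z] Complex.DeMoivre by metis
  then have "Re (z ^ k) = cos (real k * \<bar>Arg z\<bar>)" by (simp add: abs_if)
  also have "\<dots> < 0" using k(2,3) by (rule cos_lt_zero_pi)
  finally show False using powers k(1) by fastforce
qed

lemma cis_near_one:
  assumes "e > 0"
  shows "\<exists>d>0. \<forall>t. \<bar>t\<bar> < d \<longrightarrow> cmod (cis t - 1) < e"
proof -
  have "(cis \<longlongrightarrow> cis 0) (at (0::real))" by (intro tendsto_intros)
  then obtain d where "d > 0" "\<forall>t. t \<noteq> 0 \<and> dist t 0 < d \<longrightarrow> dist (cis t) 1 < e"
    using assms unfolding tendsto_iff eventually_at by auto
  then have "\<forall>t. \<bar>t\<bar> < d \<longrightarrow> cmod (cis t - 1) < e"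
    using assms by (metis cis_zero diff_self dist_norm norm_zero real_norm_def diff_0_right)
  then show ?thesis using \<open>d > 0\<close> by blast
qed

section \<open>Characters and polars\<close>

lemma character_norm: "\<phi> \<in> characters conv \<Longrightarrow> cmod (\<phi> x) = 1"
  by (auto simp: characters_def Tcirc_eq)

lemma character_mult: "\<phi> \<in> characters conv \<Longrightarrow> \<phi> (x + y) = \<phi> x * \<phi> y"
  by (auto simp: characters_def)

lemma character_zero: "\<phi> \<in> characters conv \<Longrightarrow> \<phi> 0 = 1"
  using character_mult[of \<phi> conv 0 0] character_norm[of \<phi> conv 0]
  by (metis add_0 mult_cancel_left2 norm_zero zero_neq_one)

lemma character_multiple: "\<phi> \<in> characters conv \<Longrightarrow> \<phi> (\<Sum>i<k. x) = \<phi> x ^ k"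
  by (induction k) (auto simp: character_zero character_mult)

definition polar :: "'c::topological_ab_group_add set \<Rightarrow> ('c \<Rightarrow> complex) set" where
  "polar V = {\<phi> \<in> characters top_conv. \<phi> ` V \<subseteq> Tplus}"

text \<open>The polar of a zero neighbourhood is equicontinuous at 0: if the multiples
  w, 2w, ..., nw lie in V, then \<phi>(w) is within angle \<pi>/(2n) of 1 for every
  \<phi> in the polar.\<close>
lemma polar_equicontinuous:
  fixes V W :: "'c::topological_ab_group_add set"
  assumes W: "open W" "0 \<in> W" "W \<subseteq> V" and e: "e > 0"
  shows "\<exists>W'. open W' \<and> 0 \<in> W' \<and> (\<forall>\<phi>\<in>polar V. \<forall>w\<in>W'. cmod (\<phi> w - 1) < e)"
proof -
  obtain d where d: "d > 0" "\<forall>t. \<bar>t\<bar> < d \<longrightarrow> cmod (cis t - 1) < e"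
    using cis_near_one[OF e] by blast
  obtain n :: nat where n: "pi / (2 * d) < real n" using reals_Archimedean2 by blast
  have "pi / (2 * d) > 0" using d by simp
  then have n1: "n \<ge> 1" using n by (cases n) auto
  have nd: "pi / (2 * real n) < d" using n d n1 by (simp add: field_simps)
  define W' where "W' = (\<Inter>k\<in>{1..n}. (\<lambda>x. \<Sum>i<k. x) -` W)"
  have "open W'" unfolding W'_def
    using W(1) by (intro open_INT ballI open_vimage continuous_intros) auto
  moreover have "0 \<in> W'" using W(2) by (auto simp: W'_def)
  moreover have "cmod (\<phi> w - 1) < e" if \<phi>: "\<phi> \<in> polar V" and w: "w \<in> W'" for \<phi> w
  proof -
    have ch: "\<phi> \<in> characters top_conv" and V: "\<phi> ` V \<subseteq> Tplus" using \<phi> by (auto simp: polar_def)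
    have norm1: "cmod (\<phi> w) = 1" using character_norm[OF ch] .
    have "Re (\<phi> w ^ k) \<ge> 0" if k: "k \<in> {1..n}" for k
    proof -
      have "(\<Sum>i<k. w) \<in> V" using w k W(3) by (auto simp: W'_def)
      then show ?thesis using V character_multiple[OF ch] by (force simp: Tplus_eq)
    qed
    then have "\<bar>Arg (\<phi> w)\<bar> < d" using circle_arg_bound[OF norm1 n1] nd by fastforce
    then have "cmod (cis (Arg (\<phi> w)) - 1) < e" using d(2) by blast
    then show ?thesis using unit_circle_cis[OF norm1] by metis
  qed
  ultimately show ?thesis by blast
qed

lemma character_if_near_one:
  fixes \<psi> :: "'c::topological_ab_group_add \<Rightarrow> complex"
  assumes norm1: "\<forall>x. cmod (\<psi> x) = 1" and mult: "\<forall>x y. \<psi> (x + y) = \<psi> x * \<psi> y"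
    and near: "\<forall>e>0. \<exists>W. open W \<and> 0 \<in> W \<and> (\<forall>w\<in>W. cmod (\<psi> w - 1) \<le> e)"
  shows "\<psi> \<in> characters top_conv"
proof -
  have lim: "(\<psi> \<longlongrightarrow> \<psi> x) (nhds x)" for x
  proof (rule tendstoI)
    fix e :: real assume e: "e > 0"
    then obtain W where W: "open W" "0 \<in> W" "\<forall>w\<in>W. cmod (\<psi> w - 1) \<le> e/2"
      using near by (meson half_gt_zero)
    have "((\<lambda>y. y - x) \<longlongrightarrow> x - x) (nhds x)" by (intro tendsto_diff filterlim_ident tendsto_const)
    then have "eventually (\<lambda>y. y - x \<in> W) (nhds x)"
      using topological_tendstoD W(1,2) by fastforce
    then show "eventually (\<lambda>y. dist (\<psi> y) (\<psi> x) < e) (nhds x)"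
    proof (rule eventually_mono)
      fix y assume y: "y - x \<in> W"
      have "\<psi> y = \<psi> x * \<psi> (y - x)" using mult by (metis add.commute diff_add_cancel)
      then have "dist (\<psi> y) (\<psi> x) = cmod (\<psi> x) * cmod (\<psi> (y - x) - 1)"
        by (simp add: dist_norm algebra_simps flip: norm_mult)
      also have "\<dots> \<le> e/2" using norm1 W(3) y by simp
      finally show "dist (\<psi> y) (\<psi> x) < e" using e by linarith
    qed
  qed
  have "conv_continuous top_conv top_conv \<psi>"
    unfolding conv_continuous_def top_conv_def
  proof (intro allI impI)
    fix F :: "'c filter" and x assume "F \<le> nhds x"
    then have "filtermap \<psi> F \<le> filtermap \<psi> (nhds x)" by (rule filtermap_mono)
    also have "\<dots> \<le> nhds (\<psi> x)" using lim[of x] by (simp add: filterlim_def)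
    finally show "filtermap \<psi> F \<le> nhds (\<psi> x)" .
  qed
  then show ?thesis using norm1 mult by (simp add: characters_def Tcirc_eq)
qed

lemma character_limit_homomorphism:
  assumes U: "U \<noteq> bot" and lim: "\<And>c. ((\<lambda>\<phi>. \<phi> c) \<longlongrightarrow> \<psi> c) U"
    and ch: "eventually (\<lambda>\<phi>. \<phi> \<in> characters conv) U"
  shows "\<forall>x. cmod (\<psi> x) = 1" and "\<forall>x y. \<psi> (x + y) = \<psi> x * \<psi> y"
proof -
  show "\<forall>x. cmod (\<psi> x) = 1"
  proof
    fix x
    have "eventually (\<lambda>\<phi>. cmod (\<phi> x) = 1) U"
      using ch by (rule eventually_mono) (simp add: character_norm[of _ conv])
    then have "((\<lambda>\<phi>. cmod (\<phi> x)) \<longlongrightarrow> 1) U" by (rule tendsto_eventually)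
    then show "cmod (\<psi> x) = 1" by (rule tendsto_unique[OF U tendsto_norm[OF lim]])
  qed
  show "\<forall>x y. \<psi> (x + y) = \<psi> x * \<psi> y"
  proof (intro allI)
    fix x y
    have "eventually (\<lambda>\<phi>. \<phi> x * \<phi> y = \<phi> (x + y)) U"
      using ch by (rule eventually_mono) (simp add: character_mult[of _ conv])
    then have "((\<lambda>\<phi>. \<phi> (x + y)) \<longlongrightarrow> \<psi> x * \<psi> y) U"
      by (rule iffD1[OF tendsto_cong tendsto_mult[OF lim lim]])
    then show "\<psi> (x + y) = \<psi> x * \<psi> y" by (rule tendsto_unique[OF U lim])
  qed
qed

lemma polar_closed_under_limits:
  fixes V W :: "'c::topological_ab_group_add set"
  assumes W: "open W" "0 \<in> W" "W \<subseteq> V"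
    and U: "U \<noteq> bot" "U \<le> nhds \<psi>" and ev: "eventually (\<lambda>\<phi>. \<phi> \<in> polar V) U"
  shows "\<psi> \<in> polar V"
proof -
  have "((\<lambda>\<phi>. \<phi>) \<longlongrightarrow> \<psi>) U" using U(2) by (simp add: filterlim_def)
  then have lim: "((\<lambda>\<phi>. \<phi> c) \<longlongrightarrow> \<psi> c) U" for c by (simp add: tendsto_pointwise_iff)
  have ch: "eventually (\<lambda>\<phi>. \<phi> \<in> characters top_conv) U"
    using ev by (rule eventually_mono) (simp add: polar_def)
  have nontriv: "\<not> trivial_limit U" using U(1) by simp
  note hom = character_limit_homomorphism[OF U(1) lim ch]
  have near: "\<forall>e>0. \<exists>W'. open W' \<and> 0 \<in> W' \<and> (\<forall>w\<in>W'. cmod (\<psi> w - 1) \<le> e)"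
  proof (intro allI impI)
    fix e :: real assume "e > 0"
    then obtain W' where W': "open W'" "0 \<in> W'" "\<forall>\<phi>\<in>polar V. \<forall>w\<in>W'. cmod (\<phi> w - 1) < e"
      using polar_equicontinuous[OF W] by blast
    have "cmod (\<psi> w - 1) \<le> e" if "w \<in> W'" for w
    proof (rule tendsto_upperbound[OF _ _ nontriv])
      show "((\<lambda>\<phi>. cmod (\<phi> w - 1)) \<longlongrightarrow> cmod (\<psi> w - 1)) U" by (intro tendsto_intros lim)
      show "eventually (\<lambda>\<phi>. cmod (\<phi> w - 1) \<le> e) U"
        using ev by (rule eventually_mono) (use W'(3) that in \<open>meson less_imp_le\<close>)
    qed
    then show "\<exists>W'. open W' \<and> 0 \<in> W' \<and> (\<forall>w\<in>W'. cmod (\<psi> w - 1) \<le> e)" using W' by blast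
  qed
  have "Re (\<psi> v) \<ge> 0" if "v \<in> V" for v
  proof (rule tendsto_lowerbound[OF _ _ nontriv])
    show "((\<lambda>\<phi>. Re (\<phi> v)) \<longlongrightarrow> Re (\<psi> v)) U" by (intro tendsto_intros lim)
    show "eventually (\<lambda>\<phi>. 0 \<le> Re (\<phi> v)) U"
      using ev by (rule eventually_mono) (use that in \<open>auto simp: polar_def Tplus_eq\<close>)
  qed
  then show ?thesis
    using character_if_near_one[OF hom near] hom(1) by (auto simp: polar_def Tplus_eq)
qed

text \<open>Alaoglu-Bourbaki: the polar of a zero neighbourhood is compact in the
  pointwise topology.\<close>
lemma polar_compact:
  fixes V W :: "'c::topological_ab_group_add set"
  assumes W: "open W" "0 \<in> W" "W \<subseteq> V"
  shows "compact (polar V)"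
proof (rule compact_if_ultrafilters_converge)
  fix U assume U: "ultrafilter U" and ev: "eventually (\<lambda>\<phi>. \<phi> \<in> polar V) U"
  have "eventually (\<lambda>\<phi>. \<forall>c. \<phi> c \<in> sphere 0 1) U"
    using ev by (rule eventually_mono) (simp add: polar_def character_norm[of _ top_conv])
  then obtain \<psi> where \<psi>: "U \<le> nhds \<psi>"
    using ultrafilter_pointwise_limit[OF U compact_sphere] by blast
  have "U \<noteq> bot" using U by (simp add: ultrafilter_def)
  then have "\<psi> \<in> polar V" using polar_closed_under_limits[OF W _ \<psi> ev] by blast
  then show "\<exists>\<psi>\<in>polar V. U \<le> nhds \<psi>" using \<psi> by blast
qed

section \<open>Convergence groups and bihomomorphisms\<close>

lemma convergence_group_shift:
  assumes cg: "convergence_group conv" and F: "conv F x"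
  shows "conv (filtermap (\<lambda>y. y - x) F) 0"
proof -
  have "conv (principal {x}) x" using cg by (simp add: convergence_group_def convergence_def)
  then have "conv (filtermap (\<lambda>(a, b). a - b) (F \<times>\<^sub>F principal {x})) (x - x)"
    using cg F unfolding convergence_group_def by blast
  also have "filtermap (\<lambda>(a, b). a - b) (F \<times>\<^sub>F principal {x}) = filtermap (\<lambda>y. y - x) F"
    by (simp add: prod_filter_principal_singleton2 filtermap_filtermap)
  finally show ?thesis by simp
qed

lemma bihomomorphism_zero:
  assumes "bihomomorphism u"
  shows "u 0 y = 0" and "u x 0 = 0"
proof -
  have "u (0 + 0) y = u 0 y + u 0 y" and "u x (0 + 0) = u x 0 + u x 0"
    using assms unfolding bihomomorphism_def by blast+
  then show "u 0 y = 0" and "u x 0 = 0" by simp_all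
qed

lemma bihomomorphism_expand:
  assumes "bihomomorphism u"
  shows "u x y = u x0 y0 + u (x - x0) y0 + u x0 (y - y0) + u (x - x0) (y - y0)"
proof -
  have left: "u (a + a') b = u a b + u a' b" and right: "u a (b + b') = u a b + u a b'" for a a' b b'
    using assms by (auto simp: bihomomorphism_def)
  have "u x y = u x0 y + u (x - x0) y" using left[of x0 "x - x0" y] by simp
  also have "\<dots> = u x0 y0 + u x0 (y - y0) + (u (x - x0) y0 + u (x - x0) (y - y0))"
    using right[of x0 y0 "y - y0"] right[of "x - x0" y0 "y - y0"] by simp
  finally show ?thesis by (simp add: algebra_simps)
qed

section \<open>Transposed characters and the uniform estimate on compact sets\<close>

lemma transposed_character:
  assumes bih: "bihomomorphism u" and cont: "conv_continuous convG top_conv (\<lambda>x. u x b)"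
    and \<phi>: "\<phi> \<in> characters top_conv"
  shows "(\<lambda>x. \<phi> (u x b)) \<in> characters convG"
proof -
  have \<phi>_cont: "conv_continuous top_conv top_conv \<phi>" using \<phi> by (simp add: characters_def)
  have "conv_continuous convG top_conv (\<lambda>x. \<phi> (u x b))"
    unfolding conv_continuous_def
  proof (intro allI impI)
    fix F x assume "convG F x"
    then have "top_conv (filtermap (\<lambda>x. u x b) F) (u x b)"
      using cont by (simp add: conv_continuous_def)
    then have "top_conv (filtermap \<phi> (filtermap (\<lambda>x. u x b) F)) (\<phi> (u x b))"
      using \<phi>_cont by (simp add: conv_continuous_def)
    then show "top_conv (filtermap (\<lambda>x. \<phi> (u x b)) F) (\<phi> (u x b))"
      by (simp add: filtermap_filtermap)
  qed
  moreover have "\<phi> (u (x + y) b) = \<phi> (u x b) * \<phi> (u y b)" for x y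
    using bih character_mult[OF \<phi>] by (simp add: bihomomorphism_def)
  ultimately show ?thesis using \<phi> by (simp add: characters_def)
qed

text \<open>Joint continuity of the evaluation (\<phi>, b) \<mapsto> \<phi>(u x b) on the polar of a zero
  neighbourhood: pointwise convergence of \<phi> together with convergence of b
  suffices, because the polar is equicontinuous.\<close>
lemma polar_evaluation_limit:
  fixes u :: "'a::ab_group_add \<Rightarrow> 'b::ab_group_add \<Rightarrow> 'c::topological_ab_group_add"
    and Q :: "(('c \<Rightarrow> complex) \<times> 'b) filter"
  assumes cH: "convergence_group convH" and bih: "bihomomorphism u"
    and cont: "conv_continuous convH top_conv (u x)"
    and W: "open W" "0 \<in> W" "W \<subseteq> V"
    and pol: "eventually (\<lambda>p. fst p \<in> polar V) Q"
    and lim_fst: "filtermap fst Q \<le> nhds \<psi>" and lim_snd: "convH (filtermap snd Q) b0"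
  shows "((\<lambda>p. fst p (u x (snd p))) \<longlongrightarrow> \<psi> (u x b0)) Q"
proof -
  have "((\<lambda>\<phi>. \<phi>) \<longlongrightarrow> \<psi>) (filtermap fst Q)" using lim_fst by (simp add: filterlim_def)
  then have "((\<lambda>\<phi>. \<phi> (u x b0)) \<longlongrightarrow> \<psi> (u x b0)) (filtermap fst Q)"
    by (simp add: tendsto_pointwise_iff)
  then have main: "((\<lambda>p. fst p (u x b0)) \<longlongrightarrow> \<psi> (u x b0)) Q" by (simp add: filterlim_filtermap)
  have "convH (filtermap (\<lambda>b. b - b0) (filtermap snd Q)) 0"
    by (rule convergence_group_shift[OF cH lim_snd])
  then have "filtermap (u x) (filtermap (\<lambda>b. b - b0) (filtermap snd Q)) \<le> nhds (u x 0)"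
    using cont by (simp add: conv_continuous_def top_conv_def)
  then have small: "((\<lambda>p. u x (snd p - b0)) \<longlongrightarrow> 0) Q"
    by (simp add: filterlim_def filtermap_filtermap bihomomorphism_zero[OF bih])
  have error: "((\<lambda>p. fst p (u x (snd p - b0))) \<longlongrightarrow> 1) Q"
  proof (rule tendstoI)
    fix e :: real assume "e > 0"
    then obtain W' where W': "open W'" "0 \<in> W'" "\<forall>\<phi>\<in>polar V. \<forall>w\<in>W'. cmod (\<phi> w - 1) < e"
      using polar_equicontinuous[OF W] by blast
    have "eventually (\<lambda>p. u x (snd p - b0) \<in> W') Q"
      using small W'(1,2) by (rule topological_tendstoD)
    then show "eventually (\<lambda>p. dist (fst p (u x (snd p - b0))) 1 < e) Q"
      using pol by eventually_elim (use W'(3) in \<open>simp add: dist_norm\<close>)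
  qed
  have product: "eventually (\<lambda>p. fst p (u x b0) * fst p (u x (snd p - b0)) = fst p (u x (snd p))) Q"
    using pol
  proof eventually_elim
    case (elim p)
    then have ch: "fst p \<in> characters top_conv" by (simp add: polar_def)
    have "u x (b0 + (snd p - b0)) = u x b0 + u x (snd p - b0)"
      using bih unfolding bihomomorphism_def by blast
    then show ?case using character_mult[OF ch] by simp
  qed
  have "((\<lambda>p. fst p (u x (snd p))) \<longlongrightarrow> \<psi> (u x b0) * 1) Q"
    by (rule iffD1[OF tendsto_cong[OF product] tendsto_mult[OF main error]])
  then show ?thesis by simp
qed

lemma compact_transposed_polar:
  fixes u :: "'a::ab_group_add \<Rightarrow> 'b::ab_group_add \<Rightarrow> 'c::topological_ab_group_add"
  assumes cH: "convergence_group convH" and bih: "bihomomorphism u"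
    and sc: "separately_continuous convG convH u"
    and W: "open W" "0 \<in> W" "W \<subseteq> V" and K: "conv_compact convH K"
  shows "compact ((\<lambda>(\<phi>, b) x. \<phi> (u x b)) ` (polar V \<times> K))"
proof -
  define g where "g = (\<lambda>(\<phi>::'c \<Rightarrow> complex, b) x. \<phi> (u x b))"
  define M where "M = g ` (polar V \<times> K)"
  have "compact M"
  proof (rule compact_if_ultrafilters_converge)
    fix U assume U: "ultrafilter U" and evU: "eventually (\<lambda>f. f \<in> M) U"
    txt \<open>Lift U to an ultrafilter Q of pairs and take limits of both components.\<close>
    obtain Q where Q: "ultrafilter Q" and evQ: "eventually (\<lambda>p. p \<in> polar V \<times> K) Q"
      and U_eq: "filtermap g Q = U"
      using ultrafilter_on_image[OF U evU[unfolded M_def]] by blast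
    then have pol: "eventually (\<lambda>p. fst p \<in> polar V) Q"
      by (auto elim: eventually_mono)
    then have "eventually (\<lambda>\<phi>. \<phi> \<in> polar V) (filtermap fst Q)"
      by (simp add: eventually_filtermap)
    then obtain \<psi> where \<psi>: "\<psi> \<in> polar V" "filtermap fst Q \<le> nhds \<psi>"
      using ultrafilter_compact_limit[OF ultrafilter_filtermap[OF Q] polar_compact[OF W]] by blast
    have "eventually (\<lambda>b. b \<in> K) (filtermap snd Q)"
      unfolding eventually_filtermap using evQ by (rule eventually_mono) auto
    then obtain b0 where b0: "b0 \<in> K" "convH (filtermap snd Q) b0"
      using K ultrafilter_filtermap[OF Q] by (auto simp: conv_compact_def)
    have "((\<lambda>p. g p x) \<longlongrightarrow> g (\<psi>, b0) x) Q" for x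
    proof -
      have "conv_continuous convH top_conv (u x)"
        using sc by (simp add: separately_continuous_def)
      then have "((\<lambda>p. fst p (u x (snd p))) \<longlongrightarrow> \<psi> (u x b0)) Q"
        by (rule polar_evaluation_limit[OF cH bih _ W pol \<psi>(2) b0(2)])
      then show ?thesis by (simp add: g_def case_prod_beta)
    qed
    then have "((\<lambda>f. f) \<longlongrightarrow> g (\<psi>, b0)) (filtermap g Q)"
      by (simp add: tendsto_pointwise_iff filterlim_filtermap)
    then have "U \<le> nhds (g (\<psi>, b0))" by (simp add: U_eq filterlim_def)
    moreover have "g (\<psi>, b0) \<in> M" using \<psi>(1) b0(1) by (simp add: M_def)
    ultimately show "\<exists>f\<in>M. U \<le> nhds f" by blast
  qed
  then show ?thesis by (simp add: M_def g_def)
qed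

lemma equicontinuous_positive_near_zero:
  assumes "equicontinuous conv M" and "conv A 0"
  shows "eventually (\<lambda>a. \<forall>f\<in>M. Re (f a) > 0) A"
proof -
  have "filtermap (\<lambda>(\<phi>, x). \<phi> x) (principal M \<times>\<^sub>F A) \<le> nhds 1"
    using assms by (simp add: equicontinuous_def)
  moreover have "eventually (\<lambda>z. Re z > 0) (nhds (1::complex))"
    using eventually_nhds_in_open[OF open_halfspace_Re_gt, of 1 0] by simp
  ultimately have "eventually (\<lambda>z. Re z > 0) (filtermap (\<lambda>(\<phi>, x). \<phi> x) (principal M \<times>\<^sub>F A))"
    by (rule filter_leD)
  then have "eventually (\<lambda>p. Re (fst p (snd p)) > 0) (principal M \<times>\<^sub>F A)"
    by (simp add: eventually_filtermap case_prod_beta)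
  then obtain PM Pa where PM: "eventually PM (principal M)" and Pa: "eventually Pa A"
    and pos: "\<forall>f a. PM f \<longrightarrow> Pa a \<longrightarrow> Re (f a) > 0"
    unfolding eventually_prod_filter by auto
  have PM_M: "\<forall>f\<in>M. PM f" using PM by (simp add: eventually_principal)
  show ?thesis using Pa by (rule eventually_mono) (use pos PM_M in blast)
qed

text \<open>The key estimate: if G is g-barrelled, V is quasi-convex containing a zero
  neighbourhood and K \<subseteq> H is compact, then u(a, b) \<in> V for all b \<in> K, for a near 0.
  The transposed characters form a compact, hence equicontinuous, set; so they have
  positive real part near 0, and quasi-convexity separates any u(a, b) \<notin> V.\<close>
lemma eventually_uniform_on_compact:
  fixes u :: "'a::ab_group_add \<Rightarrow> 'b::ab_group_add \<Rightarrow> 'c::topological_ab_group_add"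
  assumes cH: "convergence_group convH" and gb: "g_barrelled convG" and bih: "bihomomorphism u"
    and sc: "separately_continuous convG convH u"
    and W: "open W" "0 \<in> W" "W \<subseteq> V" and qc: "quasi_convex V"
    and K: "conv_compact convH K" and A: "convG A 0"
  shows "eventually (\<lambda>a. \<forall>b\<in>K. u a b \<in> V) A"
proof -
  define M where "M = (\<lambda>(\<phi>, b) x. \<phi> (u x b)) ` (polar V \<times> K)"
  have "compact M" unfolding M_def by (rule compact_transposed_polar[OF cH bih sc W K])
  moreover have "M \<subseteq> characters convG"
    using transposed_character[OF bih] sc
    by (auto simp: M_def polar_def separately_continuous_def)
  ultimately have "equicontinuous convG M" using gb by (simp add: g_barrelled_def)
  then have pos: "eventually (\<lambda>a. \<forall>f\<in>M. Re (f a) > 0) A"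
    using A by (rule equicontinuous_positive_near_zero)
  show ?thesis using pos
  proof (rule eventually_mono)
    fix a assume a: "\<forall>f\<in>M. Re (f a) > 0"
    show "\<forall>b\<in>K. u a b \<in> V"
    proof (intro ballI, rule ccontr)
      fix b assume b: "b \<in> K" and notin: "u a b \<notin> V"
      obtain \<phi> where \<phi>: "\<phi> \<in> characters top_conv" "\<phi> ` V \<subseteq> Tplus" "\<phi> (u a b) \<notin> Tplus"
        using qc notin unfolding quasi_convex_def by blast
      then have transposed: "(\<lambda>x. \<phi> (u x b)) \<in> M" using b by (force simp: M_def polar_def)
      have "Re (\<phi> (u a b)) > 0" using bspec[OF a transposed] by simp
      then have "\<phi> (u a b) \<in> Tplus" using character_norm[OF \<phi>(1)] by (simp add: Tplus_eq)
      then show False using \<phi>(3) by blast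
    qed
  qed
qed

section \<open>Reduction to continuity at zero\<close>

text \<open>By bi-additivity, u(x, y) - u(x0, y0) splits into u(x - x0, y0), u(x0, y - y0)
  (handled by separate continuity) and u(x - x0, y - y0); so joint continuity
  follows from joint continuity at (0, 0).\<close>
lemma jointly_continuous_if_continuous_at_zero:
  fixes u :: "'a::ab_group_add \<Rightarrow> 'b::ab_group_add \<Rightarrow> 'c::topological_ab_group_add"
  assumes cG: "convergence_group convG" and cH: "convergence_group convH"
    and bih: "bihomomorphism u" and sc: "separately_continuous convG convH u"
    and at_zero: "\<And>A B. convG A 0 \<Longrightarrow> convH B 0 \<Longrightarrow>
                   ((\<lambda>p. u (fst p) (snd p)) \<longlongrightarrow> 0) (A \<times>\<^sub>F B)"
  shows "jointly_continuous convG convH u"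
  unfolding jointly_continuous_def conv_continuous_def
proof (intro allI impI)
  fix P :: "('a \<times> 'b) filter" and p :: "'a \<times> 'b"
  assume "prod_conv convG convH P p"
  then have PG: "convG (filtermap fst P) (fst p)" and PH: "convH (filtermap snd P) (snd p)"
    by (auto simp: prod_conv_def)
  define x0 y0 where "x0 = fst p" and "y0 = snd p"
  define A B where "A = filtermap (\<lambda>q. fst q - x0) P" and "B = filtermap (\<lambda>q. snd q - y0) P"
  have A: "convG A 0"
    using convergence_group_shift[OF cG PG] by (simp add: A_def x0_def filtermap_filtermap)
  have B: "convH B 0"
    using convergence_group_shift[OF cH PH] by (simp add: B_def y0_def filtermap_filtermap)
  have "filterlim (\<lambda>q. (fst q - x0, snd q - y0)) (A \<times>\<^sub>F B) P"
    by (rule filterlim_Pair) (simp_all add: filterlim_def A_def B_def)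
  from filterlim_compose[OF at_zero[OF A B] this]
  have both: "((\<lambda>q. u (fst q - x0) (snd q - y0)) \<longlongrightarrow> 0) P" by simp
  have "filtermap (\<lambda>x. u x y0) A \<le> nhds (u 0 y0)"
    using sc A by (simp add: separately_continuous_def conv_continuous_def top_conv_def)
  then have left: "((\<lambda>q. u (fst q - x0) y0) \<longlongrightarrow> 0) P"
    by (simp add: A_def filtermap_filtermap filterlim_def bihomomorphism_zero[OF bih])
  have "filtermap (\<lambda>y. u x0 y) B \<le> nhds (u x0 0)"
    using sc B by (simp add: separately_continuous_def conv_continuous_def top_conv_def)
  then have right: "((\<lambda>q. u x0 (snd q - y0)) \<longlongrightarrow> 0) P"
    by (simp add: B_def filtermap_filtermap filterlim_def bihomomorphism_zero[OF bih])
  have "((\<lambda>q. u x0 y0 + u (fst q - x0) y0 + u x0 (snd q - y0) + u (fst q - x0) (snd q - y0))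
          \<longlongrightarrow> u x0 y0 + 0 + 0 + 0) P"
    by (intro tendsto_add tendsto_const left right both)
  then have "((\<lambda>q. u (fst q) (snd q)) \<longlongrightarrow> u x0 y0) P"
    by (simp flip: bihomomorphism_expand[OF bih])
  then show "top_conv (filtermap (\<lambda>(x, y). u x y) P) ((\<lambda>(x, y). u x y) p)"
    by (simp add: top_conv_def filterlim_def x0_def y0_def case_prod_unfold)
qed

lemma tendsto_zero_if_quasi_convex:
  fixes f :: "'x \<Rightarrow> 'c::topological_ab_group_add"
  assumes lqc: "locally_quasi_convex TYPE('c)"
    and ev: "\<And>V W. open W \<Longrightarrow> 0 \<in> W \<Longrightarrow> W \<subseteq> V \<Longrightarrow> quasi_convex V \<Longrightarrow>
               eventually (\<lambda>x. f x \<in> V) F"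
  shows "(f \<longlongrightarrow> 0) F"
proof (rule topological_tendstoI)
  fix S :: "'c set" assume S: "open S" "0 \<in> S"
  have "\<exists>V W. open W \<and> 0 \<in> W \<and> W \<subseteq> V \<and> V \<subseteq> S \<and> quasi_convex V"
    using lqc S unfolding locally_quasi_convex_def by blast
  then obtain V W where VW: "open W" "0 \<in> W" "W \<subseteq> V" "quasi_convex V" and "V \<subseteq> S"
    by blast
  have "eventually (\<lambda>x. f x \<in> V) F" by (rule ev[OF VW])
  then show "eventually (\<lambda>x. f x \<in> S) F" by (rule eventually_mono) (use \<open>V \<subseteq> S\<close> in blast)
qed

section \<open>Case (i): H locally compact\<close>

text \<open>A filter B \<rightarrow> 0 contains a compact K, and u(a, K) \<subseteq> V for a near 0.\<close>
lemma continuous_at_zero_locally_compact: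
  fixes u :: "'a::ab_group_add \<Rightarrow> 'b::ab_group_add \<Rightarrow> 'c::topological_ab_group_add"
  assumes cH: "convergence_group convH" and gb: "g_barrelled convG" and bih: "bihomomorphism u"
    and sc: "separately_continuous convG convH u" and lc: "conv_locally_compact convH"
    and W: "open W" "0 \<in> W" "W \<subseteq> V" and qc: "quasi_convex V"
    and A: "convG A 0" and B: "convH B 0"
  shows "eventually (\<lambda>p. u (fst p) (snd p) \<in> V) (A \<times>\<^sub>F B)"
proof -
  obtain K where K: "conv_compact convH K" "eventually (\<lambda>y. y \<in> K) B"
    using lc B unfolding conv_locally_compact_def by blast
  have "eventually (\<lambda>a. \<forall>b\<in>K. u a b \<in> V) A"
    by (rule eventually_uniform_on_compact[OF cH gb bih sc W qc K(1) A])
  then show ?thesis unfolding eventually_prod_filter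
    using K(2) by (intro exI[of _ "\<lambda>a. \<forall>b\<in>K. u a b \<in> V"] exI[of _ "\<lambda>b. b \<in> K"]) auto
qed

section \<open>Case (ii): G and H first countable\<close>

lemma decreasing_countable_base:
  assumes "countable_base_filter F"
  obtains D :: "nat \<Rightarrow> 'a set"
  where "\<And>n. eventually (\<lambda>x. x \<in> D n) F" "\<And>m n. m \<le> n \<Longrightarrow> D n \<subseteq> D m"
    and "\<And>P. eventually P F \<Longrightarrow> \<exists>n. \<forall>x\<in>D n. P x"
proof -
  obtain Bs :: "'a set set" where Bs: "countable Bs"
    and base: "\<And>P. eventually P F \<longleftrightarrow> (\<exists>b\<in>Bs. \<forall>x\<in>b. P x)"
    using assms unfolding countable_base_filter_def by blast
  have "Bs \<noteq> {}" using base[of "\<lambda>x. True"] by auto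
  define e where "e = from_nat_into Bs"
  have e_in: "e i \<in> Bs" for i using from_nat_into[OF \<open>Bs \<noteq> {}\<close>] by (simp add: e_def)
  have e_onto: "range e = Bs" using \<open>Bs \<noteq> {}\<close> Bs by (simp add: e_def)
  define D where "D n = (\<Inter>i\<in>{..n}. e i)" for n
  show ?thesis
  proof
    show "eventually (\<lambda>x. x \<in> D n) F" for n
    proof -
      have "\<forall>i\<in>{..n}. eventually (\<lambda>x. x \<in> e i) F" unfolding base using e_in by blast
      then show ?thesis by (simp add: D_def eventually_ball_finite_distrib)
    qed
    show "D n \<subseteq> D m" if "m \<le> n" for m n using that by (auto simp: D_def)
    show "\<exists>n. \<forall>x\<in>D n. P x" if P: "eventually P F" for P
    proof -
      obtain b where "b \<in> Bs" "\<forall>x\<in>b. P x" using P unfolding base by blast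
      moreover obtain n where "e n = b" using e_onto \<open>b \<in> Bs\<close> by blast
      ultimately show ?thesis by (auto simp: D_def)
    qed
  qed
qed

lemma not_eventually_prod_sequences:
  assumes DA: "\<And>n. eventually (\<lambda>x. x \<in> DA n) A" and DB: "\<And>n. eventually (\<lambda>y. y \<in> DB n) B"
    and not_ev: "\<not> eventually P (A \<times>\<^sub>F B)"
  obtains a b where "\<And>n. a n \<in> DA n" "\<And>n. b n \<in> DB n" "\<And>n. \<not> P (a n, b n)"
proof -
  have "\<exists>p. fst p \<in> DA n \<and> snd p \<in> DB n \<and> \<not> P p" for n
  proof (rule ccontr)
    assume "\<not> ?thesis"
    then have "\<forall>x y. x \<in> DA n \<longrightarrow> y \<in> DB n \<longrightarrow> P (x, y)" by auto
    then have "eventually P (A \<times>\<^sub>F B)"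
      unfolding eventually_prod_filter using DA[of n] DB[of n] by blast
    then show False using not_ev by blast
  qed
  then obtain ab where ab: "\<forall>n. fst (ab n) \<in> DA n \<and> snd (ab n) \<in> DB n \<and> \<not> P (ab n)"
    using choice[of "\<lambda>n p. fst p \<in> DA n \<and> snd p \<in> DB n \<and> \<not> P p"] by blast
  show ?thesis by (rule that[of "\<lambda>n. fst (ab n)" "\<lambda>n. snd (ab n)"]) (use ab in auto)
qed

lemma sequence_with_limit_compact:
  fixes D :: "nat \<Rightarrow> 'a::zero set" and b :: "nat \<Rightarrow> 'a"
  assumes c: "convergence conv" and B: "conv B 0"
    and base: "\<And>P. eventually P B \<Longrightarrow> \<exists>n. \<forall>x\<in>D n. P x"
    and dec: "\<And>m n. m \<le> n \<Longrightarrow> D n \<subseteq> D m" and b: "\<And>n. b n \<in> D n"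
  shows "conv_compact conv (insert 0 (range b))"
  unfolding conv_compact_def
proof (intro allI impI)
  let ?K = "insert 0 (range b)"
  fix U assume U: "ultrafilter U \<and> eventually (\<lambda>x. x \<in> ?K) U"
  have principal_conv: "conv U x" if "eventually (\<lambda>y. y = x) U" for x
  proof -
    have "U \<le> principal {x}" using that by (simp add: le_principal)
    moreover have "conv (principal {x}) x" and "\<forall>F G x. conv F x \<and> G \<le> F \<longrightarrow> conv G x"
      using c by (simp_all add: convergence_def)
    ultimately show ?thesis by blast
  qed
  show "\<exists>x\<in>?K. conv U x"
  proof (cases "\<exists>x\<in>?K. eventually (\<lambda>y. y = x) U")
    case True then show ?thesis using principal_conv by blast
  next
    case False
    txt \<open>U avoids every single point of K, so it is finer than B.\<close>
    then have avoid: "eventually (\<lambda>y. y \<noteq> x) U" if "x \<in> ?K" for x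
      using ultrafilter_cases[of U "\<lambda>y. y = x"] U that by auto
    have "U \<le> B"
    proof (rule filter_leI)
      fix P assume "eventually P B"
      then obtain n where n: "\<forall>x\<in>D n. P x" using base by blast
      have "eventually (\<lambda>y. \<forall>i\<in>{..<n}. y \<noteq> b i) U"
        using avoid by (simp add: eventually_ball_finite_distrib)
      then have "eventually (\<lambda>y. y \<in> ?K \<and> y \<noteq> 0 \<and> (\<forall>i\<in>{..<n}. y \<noteq> b i)) U"
        using U avoid[of 0] by (auto intro: eventually_conj)
      then show "eventually P U"
      proof (rule eventually_mono)
        fix y assume y: "y \<in> ?K \<and> y \<noteq> 0 \<and> (\<forall>i\<in>{..<n}. y \<noteq> b i)"
        then obtain m where m: "y = b m" by blast
        then have "\<not> m < n" using y by auto
        then have "y \<in> D n" using m b dec by (meson not_le subsetD)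
        then show "P y" using n by blast
      qed
    qed
    then have "conv U 0" using c B unfolding convergence_def by blast
    then show ?thesis by blast
  qed
qed

text \<open>Pass to countable-base filters A' \<ge> A, B' \<ge> B.  If u(a, b) \<in> V failed
  eventually, there would be sequences a_n \<rightarrow> 0, b_n \<rightarrow> 0 with u(a_n, b_n) \<notin> V;
  but u(a, b) \<in> V uniformly for b in the compact set {0} \<union> {b_n} once a is
  close to 0.\<close>
lemma continuous_at_zero_first_countable:
  fixes u :: "'a::ab_group_add \<Rightarrow> 'b::ab_group_add \<Rightarrow> 'c::topological_ab_group_add"
  assumes cH: "convergence_group convH" and gb: "g_barrelled convG" and bih: "bihomomorphism u"
    and sc: "separately_continuous convG convH u"
    and fG: "conv_first_countable convG" and fH: "conv_first_countable convH"
    and W: "open W" "0 \<in> W" "W \<subseteq> V" and qc: "quasi_convex V"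
    and A: "convG A 0" and B: "convH B 0"
  shows "eventually (\<lambda>p. u (fst p) (snd p) \<in> V) (A \<times>\<^sub>F B)"
proof -
  obtain A' where A': "A \<le> A'" "countable_base_filter A'" "convG A' 0"
    using fG A unfolding conv_first_countable_def by blast
  obtain B' where B': "B \<le> B'" "countable_base_filter B'" "convH B' 0"
    using fH B unfolding conv_first_countable_def by blast
  obtain DA :: "nat \<Rightarrow> 'a set"
    where DA: "\<And>n. eventually (\<lambda>x. x \<in> DA n) A'" and "\<And>m n. m \<le> n \<Longrightarrow> DA n \<subseteq> DA m"
    and DA_base: "\<And>P. eventually P A' \<Longrightarrow> \<exists>n. \<forall>x\<in>DA n. P x"
    using decreasing_countable_base[OF A'(2)] by blast
  obtain DB :: "nat \<Rightarrow> 'b set"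
    where DB: "\<And>n. eventually (\<lambda>x. x \<in> DB n) B'" "\<And>m n. m \<le> n \<Longrightarrow> DB n \<subseteq> DB m"
    and DB_base: "\<And>P. eventually P B' \<Longrightarrow> \<exists>n. \<forall>x\<in>DB n. P x"
    using decreasing_countable_base[OF B'(2)] by blast
  have "eventually (\<lambda>p. u (fst p) (snd p) \<in> V) (A' \<times>\<^sub>F B')"
  proof (rule ccontr)
    assume not_ev: "\<not> ?thesis"
    obtain a b where a: "\<And>n. a n \<in> DA n" and b: "\<And>n. b n \<in> DB n"
      and bad: "\<And>n. u (fst (a n, b n)) (snd (a n, b n)) \<notin> V"
      using not_eventually_prod_sequences[where DA = DA and DB = DB, OF DA DB(1) not_ev] by blast
    have "convergence convH" using cH by (simp add: convergence_group_def)
    then have "conv_compact convH (insert 0 (range b))"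
      by (rule sequence_with_limit_compact[where conv = convH and B = B' and D = DB and b = b,
            OF _ B'(3) DB_base DB(2) b])
    then have "eventually (\<lambda>x. \<forall>y\<in>insert 0 (range b). u x y \<in> V) A'"
      by (rule eventually_uniform_on_compact[OF cH gb bih sc W qc _ A'(3)])
    then obtain n where "\<forall>x\<in>DA n. \<forall>y\<in>insert 0 (range b). u x y \<in> V" using DA_base by blast
    then show False using a[of n] bad[of n] by auto
  qed
  moreover have "A \<times>\<^sub>F B \<le> A' \<times>\<^sub>F B'" by (rule prod_filter_mono[OF A'(1) B'(1)])
  ultimately show ?thesis by (rule filter_leD[rotated])
qed

theorem theorem3p3:
  fixes convG :: "'a::ab_group_add filter \<Rightarrow> 'a \<Rightarrow> bool"
    and convH :: "'b::ab_group_add filter \<Rightarrow> 'b \<Rightarrow> bool"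
    and u :: "'a \<Rightarrow> 'b \<Rightarrow> 'c::topological_ab_group_add"
  assumes "convergence_group convG"
    and "convergence_group convH"
    and "g_barrelled convG"
    and "locally_quasi_convex TYPE('c)"
    and "bihomomorphism u"
    and "separately_continuous convG convH u"
  shows "(conv_locally_compact convH \<longrightarrow> jointly_continuous convG convH u) \<and>
         (conv_first_countable convG \<and> conv_first_countable convH \<longrightarrow>
            jointly_continuous convG convH u)"
proof (intro conjI impI)
  assume lc: "conv_locally_compact convH"
  show "jointly_continuous convG convH u"
  proof (rule jointly_continuous_if_continuous_at_zero[OF assms(1,2,5,6)])
    fix A B assume "convG A 0" "convH B 0"
    then show "((\<lambda>p. u (fst p) (snd p)) \<longlongrightarrow> 0) (A \<times>\<^sub>F B)"
      by (intro tendsto_zero_if_quasi_convex[OF assms(4)]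
          continuous_at_zero_locally_compact[OF assms(2,3,5,6) lc])
  qed
next
  assume fc: "conv_first_countable convG \<and> conv_first_countable convH"
  show "jointly_continuous convG convH u"
  proof (rule jointly_continuous_if_continuous_at_zero[OF assms(1,2,5,6)])
    fix A B assume "convG A 0" "convH B 0"
    then show "((\<lambda>p. u (fst p) (snd p)) \<longlongrightarrow> 0) (A \<times>\<^sub>F B)"
      using fc by (intro tendsto_zero_if_quasi_convex[OF assms(4)]
          continuous_at_zero_first_countable[OF assms(2,3,5,6)]) auto
  qed
qed

end
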